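(* Let $[1,2,\dots,k]$ be a hierarchical-leadership flock and let $(x(t),v(t))$, $x_i,v_i\in\mathbb{R}^3$, solve for $t\ge0$ the Cucker–Smale system \[\dot x_i=v_i,\qquad \dot v_i=\sum_{j\in\mathcal{L}(i)}a_{ij}(x)(v_j-v_i),\qquad i=1,\dots,k,\] with $a_{ij}(x)=H/(1+|x_j-x_i|^2)^{\beta}$ for $j\in\mathcal{L}(i)$, where $H>0$ and $0<\beta<1/2$. Then there exists $B>0$, depending only on the initial configuration and the system parameters, such that \[\max_{1\le i,j\le k}|v_i(t)-v_j(t)|=O(e^{-Bt}),\qquad t>0.\]
   Context: A flock $[1,\dots,k]$ is under hierarchical leadership if $j\in\mathcal{L}(i)$ (agent $i$ is led by agent $j$) only if $j<i$, and every agent $i>1$ has a nonempty leader set $\mathcal{L}(i)$; agent $1$ has no leaders. *)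

theory Defs
  imports "HOL-Analysis.Analysis"
begin

text \<open>Hierarchical leadership flock [1,...,k]: L i is the leader set of agent i.\<close>
definition hierarchical_leadership :: "nat \<Rightarrow> (nat \<Rightarrow> nat set) \<Rightarrow> bool" where
  "hierarchical_leadership k L \<longleftrightarrow>
     (\<forall>i\<in>{1..k}. L i \<subseteq> {1..<i}) \<and> L 1 = {} \<and> (\<forall>i\<in>{2..k}. L i \<noteq> {})"

definition cs_weight :: "real \<Rightarrow> real \<Rightarrow> real^3 \<Rightarrow> real^3 \<Rightarrow> real" where
  "cs_weight H \<beta> xi xj = H / (1 + (norm (xj - xi))\<^sup>2) powr \<beta>"

end

theory Submission
  imports Defs
begin

text \<open>Induction along the hierarchy. The leader moves with constant velocity; suppose the leaders
  of agent \<open>i\<close> are within \<open>C * exp (- B * t)\<close> of it. Then \<open>u = v i - v 1 0\<close> obeys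
  \<open>u' = f - a u\<close>, where \<open>a\<close> is the total coupling weight of \<open>i\<close> and \<open>norm f \<le> a C exp (- B t)\<close>,
  and comparison with supersolutions controls \<open>norm u\<close> in four rounds. First \<open>u\<close> is bounded, so
  the distance \<open>y\<close> from \<open>i\<close> to one of its leaders grows at most linearly. Since \<open>2 \<beta> < 1\<close>,
  the coupling \<open>H / (1 + y\<^sup>2) powr \<beta>\<close> then still dominates \<open>4 / (T + t)\<close>, which forces
  \<open>norm u \<le> M / (T + t)\<^sup>2\<close>. This is integrable, so \<open>y\<close> stays bounded, \<open>a\<close> is bounded below by a
  positive constant, and \<open>u\<close> decays exponentially.\<close>

lemma nonpos_if_deriv_nonpos_where_pos:
  fixes \<psi> :: "real \<Rightarrow> real"
  assumes cont: "continuous_on {0..} \<psi>" and start: "\<psi> 0 \<le> 0"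
    and deriv: "\<And>t. t > 0 \<Longrightarrow> \<psi> t > 0 \<Longrightarrow> \<exists>D. (\<psi> has_real_derivative D) (at t) \<and> D \<le> 0"
    and t: "t \<ge> 0"
  shows "\<psi> t \<le> 0"
proof (rule ccontr)
  assume "\<not> \<psi> t \<le> 0"
  then have pos_t: "\<psi> t > 0" by simp
  define S where "S = {0..t} \<inter> \<psi> -` {..0}"
  define s where "s = Sup S"
  have "closed S"
    unfolding S_def using cont by (intro continuous_closed_preimage) (auto intro: continuous_on_subset)
  moreover have "0 \<in> S" using start t by (auto simp: S_def)
  moreover have bdd: "bdd_above S" unfolding S_def by (rule bdd_aboveI[of _ t]) auto
  ultimately have "s \<in> S" unfolding s_def by (intro closed_contains_Sup) auto
  then have s: "\<psi> s \<le> 0" "0 \<le> s" "s < t"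
    using pos_t by (auto simp: S_def order.order_iff_strict)
  have pos: "\<psi> r > 0" if "s < r" "r \<le> t" for r
  proof (rule ccontr)
    assume "\<not> \<psi> r > 0"
    then have "r \<in> S" using that s by (auto simp: S_def)
    then have "r \<le> s" unfolding s_def using bdd by (rule cSup_upper)
    then show False using that by simp
  qed
  have "continuous_on {s..t} \<psi>" using s by (intro continuous_on_subset[OF cont]) auto
  moreover have "\<psi> differentiable (at r)" if "s < r" "r < t" for r
    using deriv[of r] pos[of r] that s by (auto simp: real_differentiable_def)
  ultimately obtain l r where r: "s < r" "r < t" "(\<psi> has_real_derivative l) (at r)"
    and mvt: "\<psi> t - \<psi> s = (t - s) * l"
    using MVT[OF \<open>s < t\<close>] by blast
  obtain D where "(\<psi> has_real_derivative D) (at r)" "D \<le> 0"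
    using deriv[of r] pos[of r] r s by force
  with r(3) have "l \<le> 0" using DERIV_unique by blast
  then have "(t - s) * l \<le> 0" using s by (simp add: mult_nonneg_nonpos)
  then show False using mvt s pos_t by linarith
qed

lemma has_real_derivative_norm:
  fixes u :: "real \<Rightarrow> 'a::real_inner"
  assumes "(u has_vector_derivative u') (at t)" and "u t \<noteq> 0"
  shows "((\<lambda>s. norm (u s)) has_real_derivative sgn (u t) \<bullet> u') (at t)"
proof -
  have "((\<lambda>s. norm (u s)) has_derivative (\<lambda>h. (h *\<^sub>R u') \<bullet> sgn (u t))) (at t)"
    using has_derivative_compose[OF assms(1)[unfolded has_vector_derivative_def]
        has_derivative_norm[OF assms(2)]] .
  then show ?thesis
    unfolding has_field_derivative_def by (simp add: inner_commute mult.commute[of _ "u' \<bullet> sgn (u t)"])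
qed

lemma at_within_atLeast: "a < t \<Longrightarrow> at t within {a..} = at (t::real)"
  by (rule at_within_interior) auto

lemma norm_diff_le_of_deriv_majorant:
  fixes w z :: "real \<Rightarrow> 'a::real_inner" and G G' :: "real \<Rightarrow> real"
  assumes w: "\<And>t. t \<ge> 0 \<Longrightarrow> (w has_vector_derivative z t) (at t within {0..})"
    and G: "\<And>t. t \<ge> 0 \<Longrightarrow> (G has_real_derivative G' t) (at t within {0..})"
    and majorant: "\<And>t. t \<ge> 0 \<Longrightarrow> norm (z t) \<le> G' t" and t: "t \<ge> 0"
  shows "norm (w t - w 0) \<le> G t - G 0"
proof -
  have G_cont: "continuous_on {0..} G" by (rule DERIV_continuous_on) (use G in auto)
  have G_deriv: "(G has_real_derivative G' s) (at s)" if "s > 0" for s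
    using G[of s] that by (simp add: at_within_atLeast)
  have G_mono: "G 0 \<le> G s" if "s \<ge> 0" for s
  proof (rule DERIV_nonneg_imp_increasing_open[OF that])
    show "\<exists>D. (G has_real_derivative D) (at r) \<and> D \<ge> 0" if "0 < r" for r
    proof (intro exI conjI)
      show "(G has_real_derivative G' r) (at r)" using G_deriv that .
      show "G' r \<ge> 0" using majorant[of r] norm_ge_zero[of "z r"] that by linarith
    qed
    show "continuous_on {0..s} G" using G_cont by (rule continuous_on_subset) auto
  qed
  let ?\<psi> = "\<lambda>t. norm (w t - w 0) - (G t - G 0)"
  have w_cont: "continuous_on {0..} w" by (rule continuous_on_vector_derivative) (use w in auto)
  have "continuous_on {0..} ?\<psi>" by (intro continuous_intros w_cont G_cont)
  moreover have "?\<psi> 0 \<le> 0" by simp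
  moreover have "\<exists>D. (?\<psi> has_real_derivative D) (at s) \<and> D \<le> 0" if s: "s > 0" "?\<psi> s > 0" for s
  proof -
    have nz: "w s - w 0 \<noteq> 0" using s G_mono[of s] by auto
    have "((\<lambda>t. w t - w 0) has_vector_derivative z s) (at s)"
      using has_vector_derivative_diff[OF w[of s] has_vector_derivative_const[of "w 0"]] s
      by (simp add: at_within_atLeast)
    then have "(?\<psi> has_real_derivative sgn (w s - w 0) \<bullet> z s - (G' s - 0)) (at s)"
      using nz G_deriv[OF s(1)] by (intro DERIV_diff has_real_derivative_norm DERIV_const)
    moreover have "sgn (w s - w 0) \<bullet> z s \<le> norm (z s)"
      using Cauchy_Schwarz_ineq2[of "sgn (w s - w 0)" "z s"] nz by (simp add: norm_sgn)
    ultimately show ?thesis using majorant[of s] s by (intro exI[of _ "sgn (w s - w 0) \<bullet> z s - (G' s - 0)"]) auto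
  qed
  ultimately have "?\<psi> t \<le> 0" using t by (rule nonpos_if_deriv_nonpos_where_pos)
  then show ?thesis by simp
qed

lemma damped_norm_le_supersolution:
  fixes u f :: "real \<Rightarrow> 'a::real_inner" and a \<alpha> e g g' :: "real \<Rightarrow> real"
  assumes u: "\<And>t. t \<ge> 0 \<Longrightarrow> (u has_vector_derivative f t - a t *\<^sub>R u t) (at t within {0..})"
    and forcing: "\<And>t. t \<ge> 0 \<Longrightarrow> norm (f t) \<le> a t * e t"
    and \<alpha>: "\<And>t. t \<ge> 0 \<Longrightarrow> 0 \<le> \<alpha> t \<and> \<alpha> t \<le> a t"
    and g: "\<And>t. t \<ge> 0 \<Longrightarrow> (g has_real_derivative g' t) (at t within {0..})"
    and super: "\<And>t. t \<ge> 0 \<Longrightarrow> - \<alpha> t * g t / 2 \<le> g' t"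
    and e: "\<And>t. t \<ge> 0 \<Longrightarrow> 0 \<le> e t \<and> 2 * e t \<le> g t"
    and init: "norm (u 0) \<le> g 0" and t: "t \<ge> 0"
  shows "norm (u t) \<le> g t"
proof -
  let ?\<psi> = "\<lambda>t. norm (u t) - g t"
  have u_cont: "continuous_on {0..} u" by (rule continuous_on_vector_derivative) (use u in auto)
  have g_cont: "continuous_on {0..} g" by (rule DERIV_continuous_on) (use g in auto)
  have "continuous_on {0..} ?\<psi>" by (intro continuous_intros u_cont g_cont)
  moreover have "?\<psi> 0 \<le> 0" using init by simp
  moreover have "\<exists>D. (?\<psi> has_real_derivative D) (at s) \<and> D \<le> 0" if s: "s > 0" "?\<psi> s > 0" for s
  proof -
    have es: "0 \<le> e s" "2 * e s \<le> g s" and \<alpha>s: "0 \<le> \<alpha> s" "\<alpha> s \<le> a s" using e[of s] \<alpha>[of s] s by auto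
    have nz: "u s \<noteq> 0" using s es by auto
    have "(u has_vector_derivative f s - a s *\<^sub>R u s) (at s)"
      using u[of s] s by (simp add: at_within_atLeast)
    then have "(?\<psi> has_real_derivative sgn (u s) \<bullet> (f s - a s *\<^sub>R u s) - g' s) (at s)"
      using nz g[of s] s by (intro DERIV_diff has_real_derivative_norm) (auto simp: at_within_atLeast)
    moreover have "sgn (u s) \<bullet> (f s - a s *\<^sub>R u s) \<le> a s * e s - a s * norm (u s)"
    proof -
      have "sgn (u s) \<bullet> (f s - a s *\<^sub>R u s) = sgn (u s) \<bullet> f s - a s * norm (u s)"
        using nz by (simp add: inner_diff_right sgn_div_norm power2_norm_eq_inner[symmetric]
            power2_eq_square)
      moreover have "sgn (u s) \<bullet> f s \<le> norm (f s)"
        using Cauchy_Schwarz_ineq2[of "sgn (u s)" "f s"] nz by (simp add: norm_sgn)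
      ultimately show ?thesis using forcing[of s] s by linarith
    qed
    \<comment> \<open>where \<open>norm (u s) > g s\<close>, the damping exceeds the forcing by at least \<open>\<alpha> s * g s / 2\<close>\<close>
    moreover have "a s * e s - a s * norm (u s) \<le> g' s"
    proof -
      have gap: "g s / 2 \<le> norm (u s) - e s" and "0 \<le> g s / 2" using s es by auto
      have "a s * e s - a s * norm (u s) = - (a s * (norm (u s) - e s))" by (simp add: algebra_simps)
      also have "\<dots> \<le> - (\<alpha> s * (g s / 2))"
        using \<alpha>s gap \<open>0 \<le> g s / 2\<close> by (intro le_imp_neg_le mult_mono) auto
      also have "\<dots> \<le> g' s" using super[of s] s by simp
      finally show ?thesis .
    qed
    ultimately show ?thesis
      by (intro exI[of _ "sgn (u s) \<bullet> (f s - a s *\<^sub>R u s) - g' s"]) auto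
  qed
  ultimately have "?\<psi> t \<le> 0" using t by (rule nonpos_if_deriv_nonpos_where_pos)
  then show ?thesis by simp
qed

lemma exp_decay_mono:
  fixes M M' \<gamma> \<gamma>' t :: real
  assumes "0 \<le> M" "M \<le> M'" "\<gamma>' \<le> \<gamma>" "t \<ge> 0"
  shows "M * exp (- \<gamma> * t) \<le> M' * exp (- \<gamma>' * t)"
  using assms by (intro mult_mono) (auto intro: mult_right_mono)

lemma square_times_exp_decay_le:
  fixes B T t :: real
  assumes B: "B > 0" and t: "t \<ge> 0"
  shows "(T + t)\<^sup>2 * exp (- B * t) \<le> 2 * T\<^sup>2 + 4 / B\<^sup>2"
proof -
  have "1 + B * t + (B * t)\<^sup>2 / 2 \<le> exp (B * t)"
    using B t by (intro exp_lower_Taylor_quadratic) simp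
  then have quadratic: "(B * t)\<^sup>2 / 2 \<le> exp (B * t)"
    using mult_nonneg_nonneg[of B t] B t by linarith
  have "(T + t)\<^sup>2 \<le> 2 * T\<^sup>2 + 2 * t\<^sup>2"
    using zero_le_power2[of "T - t"] by (simp add: power2_eq_square algebra_simps)
  also have "2 * t\<^sup>2 = 4 / B\<^sup>2 * ((B * t)\<^sup>2 / 2)" using B by (simp add: power_mult_distrib)
  also have "\<dots> \<le> 4 / B\<^sup>2 * exp (B * t)" using quadratic by (rule mult_left_mono) simp
  also have "2 * T\<^sup>2 \<le> 2 * T\<^sup>2 * exp (B * t)" using B t by (simp add: mult_le_cancel_left1)
  finally have "(T + t)\<^sup>2 \<le> (2 * T\<^sup>2 + 4 / B\<^sup>2) * exp (B * t)" by (simp add: algebra_simps)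
  then show ?thesis by (simp add: exp_minus field_simps)
qed

lemma quadratic_powr_le_linear:
  fixes \<beta> K Y0 V :: real
  assumes \<beta>: "0 \<le> \<beta>" "\<beta> < 1/2" and Y0: "Y0 \<ge> 0" and V: "V \<ge> 0"
  shows "\<exists>T\<ge>1. \<forall>t\<ge>0. K * (1 + (Y0 + V * t)\<^sup>2) powr \<beta> \<le> T + t"
proof -
  define W where "W = 1 + Y0 + V"
  define p where "p = 1 - 2 * \<beta>"
  define T where "T = max 1 ((\<bar>K\<bar> * W) powr (1 / p))"
  have p: "0 < p" and W: "W \<ge> 1" and T: "T \<ge> 1" using \<beta> Y0 V by (auto simp: p_def W_def T_def)
  have "K * (1 + (Y0 + V * t)\<^sup>2) powr \<beta> \<le> T + t" if t: "t \<ge> 0" for t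
  proof -
    have "1 + (Y0 + V * t)\<^sup>2 \<le> (W * (1 + t))\<^sup>2"
    proof -
      have "0 \<le> Y0 + V * t" using Y0 V t by simp
      then have "1 + (Y0 + V * t)\<^sup>2 \<le> (1 + (Y0 + V * t))\<^sup>2"
        by (simp add: power2_eq_square algebra_simps)
      also have "\<dots> \<le> (W * (1 + t))\<^sup>2"
        using Y0 V t by (intro power_mono) (auto simp: W_def algebra_simps)
      finally show ?thesis .
    qed
    then have "(1 + (Y0 + V * t)\<^sup>2) powr \<beta> \<le> ((W * (1 + t))\<^sup>2) powr \<beta>"
      using \<beta> by (intro powr_mono2) auto
    also have "\<dots> = W powr (2 * \<beta>) * (1 + t) powr (2 * \<beta>)"
      using W t by (simp add: powr_powr powr_mult flip: powr_numeral)
    also have "\<dots> \<le> W * (T + t) powr (2 * \<beta>)"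
      using \<beta> W t T powr_mono[of "2 * \<beta>" 1 W] by (intro mult_mono powr_mono2) auto
    finally have growth: "(1 + (Y0 + V * t)\<^sup>2) powr \<beta> \<le> W * (T + t) powr (2 * \<beta>)" .
    have "\<bar>K\<bar> * W = ((\<bar>K\<bar> * W) powr (1 / p)) powr p" using p W by (simp add: powr_powr)
    also have "\<dots> \<le> T powr p" using p by (intro powr_mono2) (auto simp: T_def)
    also have "\<dots> \<le> (T + t) powr p" using p t T by (intro powr_mono2) auto
    finally have "\<bar>K\<bar> * W * (T + t) powr (2 * \<beta>) \<le> (T + t) powr p * (T + t) powr (2 * \<beta>)"
      by (rule mult_right_mono) simp
    also have "\<dots> = T + t" using T t by (simp add: p_def flip: powr_add)
    finally have "\<bar>K\<bar> * (W * (T + t) powr (2 * \<beta>)) \<le> T + t" by (simp add: mult.assoc)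
    moreover have "K * (1 + (Y0 + V * t)\<^sup>2) powr \<beta> \<le> \<bar>K\<bar> * (W * (T + t) powr (2 * \<beta>))"
      using growth by (intro mult_mono) auto
    ultimately show ?thesis by linarith
  qed
  then show ?thesis using T by blast
qed

lemma powr_one_plus_square_pos: "0 < (1 + x\<^sup>2) powr p" for x p :: real
proof -
  have "0 < 1 + x\<^sup>2" by (simp add: add_pos_nonneg)
  then show ?thesis by simp
qed

definition exp_converges :: "(real \<Rightarrow> 'a::real_normed_vector) \<Rightarrow> 'a \<Rightarrow> bool" where
  "exp_converges w c \<longleftrightarrow> (\<exists>M \<gamma>. 0 < \<gamma> \<and> (\<forall>t\<ge>0. norm (w t - c) \<le> M * exp (- \<gamma> * t)))"

lemma exp_converges_uniform:
  assumes "finite I" and "\<And>i. i \<in> I \<Longrightarrow> exp_converges (w i) c"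
  shows "\<exists>M \<gamma>. 0 \<le> M \<and> 0 < \<gamma> \<and> (\<forall>i\<in>I. \<forall>t\<ge>0. norm (w i t - c) \<le> M * exp (- \<gamma> * t))"
  using assms
proof (induction I rule: finite_induct)
  case empty
  show ?case by (intro exI[of _ 0] exI[of _ 1]) simp
next
  case (insert i I)
  obtain M \<gamma> where M: "0 \<le> M" and \<gamma>: "0 < \<gamma>"
    and bound: "\<And>j t. j \<in> I \<Longrightarrow> t \<ge> 0 \<Longrightarrow> norm (w j t - c) \<le> M * exp (- \<gamma> * t)"
    using insert.IH insert.prems by force
  obtain M' \<gamma>' where \<gamma>': "0 < \<gamma>'"
    and bound': "\<And>t. t \<ge> 0 \<Longrightarrow> norm (w i t - c) \<le> M' * exp (- \<gamma>' * t)"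
    using insert.prems[of i] unfolding exp_converges_def by blast
  have M': "0 \<le> M'" using order_trans[OF norm_ge_zero bound'[of 0]] by simp
  have "norm (w j t - c) \<le> max M M' * exp (- min \<gamma> \<gamma>' * t)" if "j \<in> insert i I" "t \<ge> 0" for j t
  proof (cases "j = i")
    case True
    have "norm (w j t - c) \<le> M' * exp (- \<gamma>' * t)" using bound' that True by simp
    also have "\<dots> \<le> max M M' * exp (- min \<gamma> \<gamma>' * t)" using M' that by (intro exp_decay_mono) auto
    finally show ?thesis .
  next
    case False
    have "norm (w j t - c) \<le> M * exp (- \<gamma> * t)" using bound that False by simp
    also have "\<dots> \<le> max M M' * exp (- min \<gamma> \<gamma>' * t)" using M that by (intro exp_decay_mono) auto
    finally show ?thesis .
  qed
  then show ?case using M \<gamma> \<gamma>' by (intro exI[of _ "max M M'"] exI[of _ "min \<gamma> \<gamma>'"]) auto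
qed

lemma sum_scaleR_diff_recentre:
  fixes p :: "'i \<Rightarrow> 'a::real_vector"
  shows "(\<Sum>j\<in>S. w j *\<^sub>R (p j - q)) = (\<Sum>j\<in>S. w j *\<^sub>R (p j - c)) - (\<Sum>j\<in>S. w j) *\<^sub>R (q - c)"
proof -
  have "(\<Sum>j\<in>S. w j *\<^sub>R (p j - q)) = (\<Sum>j\<in>S. w j *\<^sub>R (p j - c) - w j *\<^sub>R (q - c))"
    by (rule sum.cong) (simp_all add: algebra_simps)
  then show ?thesis by (simp add: sum_subtractf scaleR_sum_left)
qed

lemma norm_sum_scaleR_le:
  fixes p :: "'i \<Rightarrow> 'a::real_normed_vector"
  assumes "\<And>j. j \<in> S \<Longrightarrow> 0 \<le> w j" and "\<And>j. j \<in> S \<Longrightarrow> norm (p j) \<le> e"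
  shows "norm (\<Sum>j\<in>S. w j *\<^sub>R p j) \<le> (\<Sum>j\<in>S. w j) * e"
proof -
  have "norm (\<Sum>j\<in>S. w j *\<^sub>R p j) \<le> (\<Sum>j\<in>S. norm (w j *\<^sub>R p j))" by (rule norm_sum)
  also have "\<dots> = (\<Sum>j\<in>S. w j * norm (p j))" using assms(1) by (intro sum.cong) auto
  also have "\<dots> \<le> (\<Sum>j\<in>S. w j * e)" using assms by (intro sum_mono mult_left_mono) auto
  finally show ?thesis by (simp add: sum_distrib_right)
qed

text \<open>A follower whose leaders are within \<open>C * exp (- B * t)\<close> of a common limit velocity:
  \<open>u\<close> is its velocity relative to that limit, \<open>y\<close> (with derivative \<open>z\<close>) its position relative
  to one of its leaders, \<open>a\<close> its total coupling weight and \<open>f\<close> the pull of its leaders.\<close>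

locale follower =
  fixes u f :: "real \<Rightarrow> 'a::real_inner" and y z :: "real \<Rightarrow> 'b::real_inner"
    and a :: "real \<Rightarrow> real" and H \<beta> C B :: real
  assumes u_deriv: "\<And>t. t \<ge> 0 \<Longrightarrow> (u has_vector_derivative f t - a t *\<^sub>R u t) (at t within {0..})"
    and forcing_bound: "\<And>t. t \<ge> 0 \<Longrightarrow> norm (f t) \<le> a t * (C * exp (- B * t))"
    and y_deriv: "\<And>t. t \<ge> 0 \<Longrightarrow> (y has_vector_derivative z t) (at t within {0..})"
    and z_bound: "\<And>t. t \<ge> 0 \<Longrightarrow> norm (z t) \<le> norm (u t) + C * exp (- B * t)"
    and coupling_lower: "\<And>t. t \<ge> 0 \<Longrightarrow> H / (1 + (norm (y t))\<^sup>2) powr \<beta> \<le> a t"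
    and H_pos: "H > 0" and \<beta>: "0 \<le> \<beta>" "\<beta> < 1/2" and C_nonneg: "C \<ge> 0" and B_pos: "B > 0"
begin

lemma coupling_nonneg: "t \<ge> 0 \<Longrightarrow> 0 \<le> a t"
  using coupling_lower[of t] divide_pos_pos[OF H_pos powr_one_plus_square_pos, of "norm (y t)" \<beta>]
  by linarith

lemma coupling_ge_of_norm_le:
  assumes "t \<ge> 0" "norm (y t) \<le> Y"
  shows "H / (1 + Y\<^sup>2) powr \<beta> \<le> a t"
proof -
  have "(1 + (norm (y t))\<^sup>2) powr \<beta> \<le> (1 + Y\<^sup>2) powr \<beta>"
    using assms \<beta> by (intro powr_mono2 add_left_mono power_mono) auto
  then have "H / (1 + Y\<^sup>2) powr \<beta> \<le> H / (1 + (norm (y t))\<^sup>2) powr \<beta>"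
    using H_pos by (intro divide_left_mono mult_pos_pos powr_one_plus_square_pos) auto
  then show ?thesis using coupling_lower[OF assms(1)] by linarith
qed

lemma leader_gap_le: "t \<ge> 0 \<Longrightarrow> C * exp (- B * t) \<le> C"
  using C_nonneg B_pos by (simp add: mult_left_le)

lemma u_bounded: "t \<ge> 0 \<Longrightarrow> norm (u t) \<le> max (norm (u 0)) (2 * C)"
proof (rule damped_norm_le_supersolution[where \<alpha>="\<lambda>_. 0" and g'="\<lambda>_. 0", OF u_deriv forcing_bound])
  show "0 \<le> C * exp (- B * s) \<and> 2 * (C * exp (- B * s)) \<le> max (norm (u 0)) (2 * C)"
    if "s \<ge> 0" for s
    using leader_gap_le[OF that] C_nonneg by (simp add: le_max_iff_disj)
qed (use coupling_nonneg in \<open>auto intro: DERIV_const\<close>)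

lemma y_linear_growth: "\<exists>Y0 V. 0 \<le> Y0 \<and> 0 \<le> V \<and> (\<forall>t\<ge>0. norm (y t) \<le> Y0 + V * t)"
proof -
  define V where "V = max (norm (u 0)) (2 * C) + C"
  have "0 \<le> V" using C_nonneg by (simp add: V_def add_increasing)
  moreover have "norm (y t) \<le> norm (y 0) + V * t" if t: "t \<ge> 0" for t
  proof -
  have "norm (y t - y 0) \<le> V * t - V * 0"
  proof (rule norm_diff_le_of_deriv_majorant[OF y_deriv _ _ t])
    show "((\<lambda>t. V * t) has_real_derivative V) (at s within {0..})" for s
      using DERIV_cmult_Id .
    show "norm (z s) \<le> V" if "s \<ge> 0" for s
      using z_bound[OF that] u_bounded[OF that] leader_gap_le[OF that] by (simp add: V_def)
  qed
    then show ?thesis using norm_triangle_ineq2[of "y t" "y 0"] by simp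
  qed
  ultimately show ?thesis by (intro exI[of _ "norm (y 0)"] exI[of _ V]) auto
qed

text \<open>This is the only place where \<open>\<beta> < 1/2\<close> is used: the coupling decays more slowly than
  \<open>1/t\<close>, which is what makes the relative velocity integrable.\<close>

lemma coupling_ge_inverse_linear: "\<exists>T\<ge>1. \<forall>t\<ge>0. 4 / (T + t) \<le> a t"
proof -
  obtain Y0 V where Y0: "0 \<le> Y0" and V: "0 \<le> V" and y: "\<And>t. t \<ge> 0 \<Longrightarrow> norm (y t) \<le> Y0 + V * t"
    using y_linear_growth by blast
  obtain T where T: "T \<ge> 1" and sublinear: "\<And>t. t \<ge> 0 \<Longrightarrow> 4 / H * (1 + (Y0 + V * t)\<^sup>2) powr \<beta> \<le> T + t"
    using quadratic_powr_le_linear[OF \<beta> Y0 V, of "4 / H"] by blast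
  have "4 / (T + t) \<le> a t" if t: "t \<ge> 0" for t
  proof -
    have "4 / (T + t) \<le> H / (1 + (Y0 + V * t)\<^sup>2) powr \<beta>"
      using sublinear[OF t] H_pos T t powr_one_plus_square_pos[of "Y0 + V * t" \<beta>]
      by (simp add: field_simps)
    also have "\<dots> \<le> a t" using coupling_ge_of_norm_le[OF t y[OF t]] .
    finally show ?thesis .
  qed
  then show ?thesis using T by blast
qed

lemma u_poly_decay: "\<exists>M T. 0 \<le> M \<and> 1 \<le> T \<and> (\<forall>t\<ge>0. norm (u t) \<le> M / (T + t)\<^sup>2)"
proof -
  obtain T where T: "T \<ge> 1" and coupling: "\<And>t. t \<ge> 0 \<Longrightarrow> 4 / (T + t) \<le> a t"
    using coupling_ge_inverse_linear by blast
  define K where "K = 2 * T\<^sup>2 + 4 / B\<^sup>2"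
  define M where "M = max (2 * C * K) (norm (u 0) * T\<^sup>2)"
  have M: "0 \<le> M" by (simp add: M_def le_max_iff_disj)
  have "norm (u t) \<le> M / (T + t)\<^sup>2" if t: "t \<ge> 0" for t
  proof (rule damped_norm_le_supersolution[where \<alpha>="\<lambda>t. 4 / (T + t)", OF u_deriv forcing_bound _ _ _ _ _ t])
    show "((\<lambda>t. M / (T + t)\<^sup>2) has_real_derivative - 2 * M / (T + s) ^ 3) (at s within {0..})"
      if "s \<ge> 0" for s
      by (rule derivative_eq_intros refl)+
        (use T that in \<open>simp_all add: divide_simps power2_eq_square power3_eq_cube\<close>)
    have "- (4 / X) * (M / X\<^sup>2) / 2 = - 2 * M / X ^ 3" for X :: real
      by (simp add: power2_eq_square power3_eq_cube)
    then show "- (4 / (T + s)) * (M / (T + s)\<^sup>2) / 2 \<le> - 2 * M / (T + s) ^ 3" for s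
      by (rule eq_refl)
    show "0 \<le> C * exp (- B * s) \<and> 2 * (C * exp (- B * s)) \<le> M / (T + s)\<^sup>2" if s: "s \<ge> 0" for s
    proof
      show "0 \<le> C * exp (- B * s)" using C_nonneg by simp
      have "2 * C * ((T + s)\<^sup>2 * exp (- B * s)) \<le> 2 * C * K"
        using square_times_exp_decay_le[OF B_pos s, of T] C_nonneg
        unfolding K_def by (intro mult_left_mono) auto
      also have "\<dots> \<le> M" by (simp add: M_def)
      finally show "2 * (C * exp (- B * s)) \<le> M / (T + s)\<^sup>2"
        using T s by (simp add: field_simps)
    qed
    show "norm (u 0) \<le> M / (T + 0)\<^sup>2" using T by (simp add: M_def field_simps)
  qed (use T coupling in auto)
  then show ?thesis using M T by blast
qed

lemma y_bounded: "\<exists>Y. \<forall>t\<ge>0. norm (y t) \<le> Y"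
proof -
  obtain M T where M: "0 \<le> M" and T: "1 \<le> T" and u: "\<And>t. t \<ge> 0 \<Longrightarrow> norm (u t) \<le> M / (T + t)\<^sup>2"
    using u_poly_decay by blast
  define G where "G t = - (M / (T + t) + C / B * exp (- B * t))" for t
  have "norm (y t) \<le> norm (y 0) + (M / T + C / B)" if t: "t \<ge> 0" for t
  proof -
    have "norm (y t - y 0) \<le> G t - G 0"
    proof (rule norm_diff_le_of_deriv_majorant[OF y_deriv _ _ t])
      show "(G has_real_derivative M / (T + s)\<^sup>2 + C * exp (- B * s)) (at s within {0..})"
        if "s \<ge> 0" for s
      proof -
        have "((\<lambda>t. M / (T + t)) has_real_derivative - M / (T + s)\<^sup>2) (at s within {0..})"
          by (rule derivative_eq_intros refl)+
            (use T that in \<open>simp_all add: divide_simps power2_eq_square\<close>)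
        moreover have "((\<lambda>t. C / B * exp (- B * t)) has_real_derivative - C * exp (- B * s))
            (at s within {0..})"
          using B_pos by (auto intro!: derivative_eq_intros)
        ultimately have "(G has_real_derivative - (- M / (T + s)\<^sup>2 + - C * exp (- B * s)))
            (at s within {0..})"
          unfolding G_def by (intro DERIV_minus DERIV_add)
        then show ?thesis by (simp add: add.commute)
      qed
      show "norm (z s) \<le> M / (T + s)\<^sup>2 + C * exp (- B * s)" if "s \<ge> 0" for s
        using z_bound[OF that] u[OF that] by simp
    qed
    moreover have "G t \<le> 0"
    proof -
      have "0 \<le> M / (T + t)" using M T t by simp
      moreover have "0 \<le> C / B * exp (- B * t)" using C_nonneg B_pos by simp
      ultimately show ?thesis by (simp add: G_def)
    qed
    moreover have "G 0 = - (M / T + C / B)" by (simp add: G_def)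
    ultimately show ?thesis using norm_triangle_ineq2[of "y t" "y 0"] by linarith
  qed
  then show ?thesis by blast
qed

lemma coupling_bounded_below: "\<exists>\<alpha>>0. \<forall>t\<ge>0. \<alpha> \<le> a t"
proof -
  obtain Y where "\<And>t. t \<ge> 0 \<Longrightarrow> norm (y t) \<le> Y" using y_bounded by blast
  then have "\<forall>t\<ge>0. H / (1 + Y\<^sup>2) powr \<beta> \<le> a t" by (simp add: coupling_ge_of_norm_le)
  moreover have "0 < H / (1 + Y\<^sup>2) powr \<beta>" using H_pos powr_one_plus_square_pos by simp
  ultimately show ?thesis by blast
qed

lemma u_exp_converges: "exp_converges u 0"
proof -
  obtain \<alpha> where \<alpha>: "\<alpha> > 0" and coupling: "\<And>t. t \<ge> 0 \<Longrightarrow> \<alpha> \<le> a t"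
    using coupling_bounded_below by blast
  define \<gamma> where "\<gamma> = min B (\<alpha> / 2)"
  define M where "M = max (norm (u 0)) (2 * C)"
  have \<gamma>: "0 < \<gamma>" "\<gamma> \<le> B" "\<gamma> \<le> \<alpha> / 2" using \<alpha> B_pos by (auto simp: \<gamma>_def)
  have M: "0 \<le> M" "2 * C \<le> M" by (simp_all add: M_def le_max_iff_disj)
  have "norm (u t) \<le> M * exp (- \<gamma> * t)" if t: "t \<ge> 0" for t
  proof (rule damped_norm_le_supersolution[where \<alpha>="\<lambda>_. \<alpha>", OF u_deriv forcing_bound _ _ _ _ _ t])
    show "((\<lambda>t. M * exp (- \<gamma> * t)) has_real_derivative - \<gamma> * (M * exp (- \<gamma> * s))) (at s within {0..})"
      for s
      by (auto intro!: derivative_eq_intros)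
    show "- \<alpha> * (M * exp (- \<gamma> * s)) / 2 \<le> - \<gamma> * (M * exp (- \<gamma> * s))" for s
    proof -
      have "\<gamma> * (M * exp (- \<gamma> * s)) \<le> \<alpha> / 2 * (M * exp (- \<gamma> * s))"
        using \<gamma>(3) M(1) by (intro mult_right_mono) auto
      then show ?thesis by (simp add: algebra_simps)
    qed
    show "0 \<le> C * exp (- B * s) \<and> 2 * (C * exp (- B * s)) \<le> M * exp (- \<gamma> * s)" if "s \<ge> 0" for s
      using exp_decay_mono[of "2 * C" M \<gamma> B s] C_nonneg M \<gamma> that by simp
  qed (use \<alpha> coupling in \<open>auto simp: M_def le_max_iff_disj\<close>)
  then show ?thesis unfolding exp_converges_def using \<gamma>(1) by auto
qed

end

lemma cucker_smale_follower_exp_converges: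
  fixes x v :: "'i \<Rightarrow> real \<Rightarrow> real^3" and n :: 'i and Ln :: "'i set"
  assumes H: "H > 0" and \<beta>: "0 \<le> \<beta>" "\<beta> < 1/2" and Ln: "finite Ln" "Ln \<noteq> {}"
    and xdot: "\<And>i t. i \<in> insert n Ln \<Longrightarrow> t \<ge> 0 \<Longrightarrow>
                 (x i has_vector_derivative v i t) (at t within {0..})"
    and vdot: "\<And>t. t \<ge> 0 \<Longrightarrow>
                 (v n has_vector_derivative
                    (\<Sum>j\<in>Ln. cs_weight H \<beta> (x n t) (x j t) *\<^sub>R (v j t - v n t)))
                 (at t within {0..})"
    and leaders: "\<And>j. j \<in> Ln \<Longrightarrow> exp_converges (v j) c"
  shows "exp_converges (v n) c"
proof -
  obtain C B where C: "0 \<le> C" and B: "0 < B"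
    and leader_bound: "\<And>j t. j \<in> Ln \<Longrightarrow> t \<ge> 0 \<Longrightarrow> norm (v j t - c) \<le> C * exp (- B * t)"
    using exp_converges_uniform[where w = v, OF Ln(1) leaders] by blast
  obtain j0 where j0: "j0 \<in> Ln" using Ln(2) by blast
  define w where "w j t = cs_weight H \<beta> (x n t) (x j t)" for j t
  have w_nonneg: "0 \<le> w j t" for j t using H by (simp add: w_def cs_weight_def)
  interpret follower "\<lambda>t. v n t - c" "\<lambda>t. \<Sum>j\<in>Ln. w j t *\<^sub>R (v j t - c)"
    "\<lambda>t. x n t - x j0 t" "\<lambda>t. v n t - v j0 t" "\<lambda>t. \<Sum>j\<in>Ln. w j t" H \<beta> C B
  proof
    fix t :: real assume t: "t \<ge> 0"
    show "((\<lambda>t. v n t - c) has_vector_derivative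
        (\<Sum>j\<in>Ln. w j t *\<^sub>R (v j t - c)) - (\<Sum>j\<in>Ln. w j t) *\<^sub>R (v n t - c)) (at t within {0..})"
      using has_vector_derivative_diff[OF vdot[OF t] has_vector_derivative_const[of c]]
        sum_scaleR_diff_recentre[where w="\<lambda>j. w j t" and p="\<lambda>j. v j t" and q="v n t" and c=c and S=Ln]
      by (simp add: w_def)
    show "norm (\<Sum>j\<in>Ln. w j t *\<^sub>R (v j t - c)) \<le> (\<Sum>j\<in>Ln. w j t) * (C * exp (- B * t))"
      using w_nonneg leader_bound t by (intro norm_sum_scaleR_le) auto
    show "((\<lambda>t. x n t - x j0 t) has_vector_derivative v n t - v j0 t) (at t within {0..})"
      using j0 t by (intro has_vector_derivative_diff xdot) auto
    have "norm (v n t - v j0 t) \<le> norm (v n t - c) + norm (v j0 t - c)"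
      using norm_triangle_ineq4[of "v n t - c" "v j0 t - c"] by simp
    then show "norm (v n t - v j0 t) \<le> norm (v n t - c) + C * exp (- B * t)"
      using leader_bound[OF j0 t] by linarith
    have "H / (1 + (norm (x n t - x j0 t))\<^sup>2) powr \<beta> = w j0 t"
      by (simp add: w_def cs_weight_def norm_minus_commute)
    also have "\<dots> \<le> (\<Sum>j\<in>Ln. w j t)" by (rule member_le_sum[OF j0 _ Ln(1)]) (rule w_nonneg)
    finally show "H / (1 + (norm (x n t - x j0 t))\<^sup>2) powr \<beta> \<le> (\<Sum>j\<in>Ln. w j t)" .
  qed (use H \<beta> C B in auto)
  show ?thesis using u_exp_converges by (simp add: exp_converges_def)
qed

lemma hierarchical_flock_exp_converges:
  fixes x v :: "nat \<Rightarrow> real \<Rightarrow> real^3"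
  assumes hier: "hierarchical_leadership k L"
    and H: "H > 0" and \<beta>: "0 \<le> \<beta>" "\<beta> < 1/2"
    and xdot: "\<And>i t. i \<in> {1..k} \<Longrightarrow> t \<ge> 0 \<Longrightarrow>
                 (x i has_vector_derivative v i t) (at t within {0..})"
    and vdot: "\<And>i t. i \<in> {1..k} \<Longrightarrow> t \<ge> 0 \<Longrightarrow>
                 (v i has_vector_derivative
                    (\<Sum>j\<in>L i. cs_weight H \<beta> (x i t) (x j t) *\<^sub>R (v j t - v i t)))
                 (at t within {0..})"
  shows "i \<in> {1..k} \<Longrightarrow> exp_converges (v i) (v 1 0)"
proof (induction i rule: less_induct)
  case (less i)
  consider "i = 1" | "i \<in> {2..k}" using less.prems by (cases "i = 1") auto
  then show ?case
  proof cases
    case 1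
    have "L 1 = {}" using hier by (simp add: hierarchical_leadership_def)
    then have "(v 1 has_vector_derivative 0) (at t within {0..})" if "t \<in> {0..}" for t
      using vdot[of 1 t] less.prems that by (simp add: 1)
    then obtain c where "\<And>t. t \<in> {0..} \<Longrightarrow> v 1 t = c"
      by (rule has_vector_derivative_zero_constant[OF convex_real_interval(1)]) auto
    then show ?thesis unfolding exp_converges_def 1 by (intro exI[of _ 0] exI[of _ 1]) simp
  next
    case 2
    then have Li: "L i \<subseteq> {1..<i}" "L i \<noteq> {}" using hier by (auto simp: hierarchical_leadership_def)
    have "finite (L i)" using Li(1) by (rule finite_subset) simp
    moreover have "(x j has_vector_derivative v j t) (at t within {0..})"
      if "j \<in> insert i (L i)" "t \<ge> 0" for j t
      using that Li(1) 2 by (intro xdot) auto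
    moreover have "(v i has_vector_derivative
        (\<Sum>j\<in>L i. cs_weight H \<beta> (x i t) (x j t) *\<^sub>R (v j t - v i t))) (at t within {0..})"
      if "t \<ge> 0" for t
      using 2 that by (intro vdot) auto
    moreover have "exp_converges (v j) (v 1 0)" if "j \<in> L i" for j
      using that Li(1) 2 by (intro less.IH) auto
    ultimately show ?thesis by (rule cucker_smale_follower_exp_converges[OF H \<beta> _ Li(2)])
  qed
qed

theorem theorem5:
  fixes k :: nat and L :: "nat \<Rightarrow> nat set" and H \<beta> :: real
    and x v :: "nat \<Rightarrow> real \<Rightarrow> real^3"
  assumes hier: "hierarchical_leadership k L"
    and H: "H > 0" and beta: "0 < \<beta>" "\<beta> < 1/2"
    and xdot: "\<And>i t. i \<in> {1..k} \<Longrightarrow> t \<ge> 0 \<Longrightarrow>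
                 (x i has_vector_derivative v i t) (at t within {0..})"
    and vdot: "\<And>i t. i \<in> {1..k} \<Longrightarrow> t \<ge> 0 \<Longrightarrow>
                 (v i has_vector_derivative
                    (\<Sum>j\<in>L i. cs_weight H \<beta> (x i t) (x j t) *\<^sub>R (v j t - v i t)))
                 (at t within {0..})"
  shows "\<exists>B>0. \<exists>C. \<forall>t>0. (\<forall>i\<in>{1..k}. \<forall>j\<in>{1..k}. norm (v i t - v j t) \<le> C * exp (- B * t))"
proof -
  have "exp_converges (v i) (v 1 0)" if "i \<in> {1..k}" for i
    using hierarchical_flock_exp_converges[OF hier H _ beta(2) xdot vdot that] beta(1) by simp
  from exp_converges_uniform[where w = v, OF finite_atLeastAtMost this]
  obtain M \<gamma> where \<gamma>: "0 < \<gamma>"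
    and bound: "\<forall>i\<in>{1..k}. \<forall>t\<ge>0. norm (v i t - v 1 0) \<le> M * exp (- \<gamma> * t)"
    by blast
  have "norm (v i t - v j t) \<le> 2 * M * exp (- \<gamma> * t)" if "i \<in> {1..k}" "j \<in> {1..k}" "t > 0" for i j t
  proof -
    have "norm (v i t - v j t) \<le> norm (v i t - v 1 0) + norm (v j t - v 1 0)"
      using norm_triangle_ineq4[of "v i t - v 1 0" "v j t - v 1 0"] by simp
    moreover have "norm (v i t - v 1 0) \<le> M * exp (- \<gamma> * t)" "norm (v j t - v 1 0) \<le> M * exp (- \<gamma> * t)"
      using bound that by auto
    ultimately show ?thesis by simp
  qed
  then show ?thesis using \<gamma> by (intro exI[of _ \<gamma>] conjI exI[of _ "2 * M"] allI impI ballI) auto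
qed

end
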